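(* Let $n\in\mathbb{Z}^+$ with $n>0$. Then $$\binom{2n}{n} = \left((4^n+1)^{2n}\bmod (4^{n(n+1)}+1)\right)\bmod (4^n-1).$$
   Context: For integers, $u\bmod m$ denotes the least non-negative remainder of $u$ upon division by $m>0$. *)

theory Defs
  imports Main
begin

end

theory Submission
  imports Defs Complex_Main
begin

text \<open>
  Put \<open>x = 4^n\<close> and \<open>c k = (2n choose k)\<close>. Since \<open>x^(n+1) \<equiv> -1\<close> modulo
  \<open>x^(n+1) + 1\<close>, the binomial expansion of \<open>(x + 1)^(2n)\<close> folds to
  \<open>\<Sum>k\<le>n. c k * x^k  -  \<Sum>j<n. c (n+1+j) * x^j\<close>. Every \<open>c k\<close> is at most
  \<open>c n \<le> x - 2\<close>, i.e. a digit in base \<open>x\<close>, so the folded value lies in \<open>[0, x^(n+1)]\<close>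
  and is the remainder. Modulo \<open>x - 1\<close> every power of \<open>x\<close> is \<open>1\<close>, and by the symmetry
  \<open>c (n+1+j) = c (n-1-j)\<close> everything cancels except \<open>c n\<close>.
\<close>

lemma choose_add_two_le_power:
  assumes "0 < k" "k < m"
  shows "(m choose k) + 2 \<le> 2 ^ m"
proof -
  have "(m choose k) + 2 = (\<Sum>i\<in>{0, k, m}. m choose i)"
    using assms by auto
  also have "\<dots> \<le> (\<Sum>i\<le>m. m choose i)"
    using assms by (intro sum_mono2) auto
  finally show ?thesis
    by (simp add: choose_row_sum)
qed

lemma sum_lessThan_add:
  fixes f :: "nat \<Rightarrow> 'a::comm_monoid_add"
  shows "(\<Sum>k<a + m. f k) = (\<Sum>k<a. f k) + (\<Sum>j<m. f (a + j))"
  by (induction m) (auto simp: add.assoc)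

lemma sum_digits_less_power:
  fixes x :: int
  assumes "\<And>j. j < n \<Longrightarrow> 0 \<le> c j \<and> c j < x"
  shows "(\<Sum>j<n. c j * x ^ j) < x ^ n"
  using assms
proof (induction n)
  case 0
  then show ?case by simp
next
  case (Suc n)
  then have "0 \<le> x"
    by fastforce
  with Suc have "(\<Sum>j<Suc n. c j * x ^ j) \<le> (x ^ n - 1) + (x - 1) * x ^ n"
    by (auto intro!: add_mono mult_right_mono)
  also have "\<dots> < x ^ Suc n"
    by (simp add: algebra_simps)
  finally show ?case .
qed

lemma sum_powers_mod_pred:
  fixes x :: int
  shows "(\<Sum>j\<in>A. c j * x ^ j) mod (x - 1) = sum c A mod (x - 1)"
proof -
  have "(\<Sum>j\<in>A. c j * x ^ j) - sum c A = (\<Sum>j\<in>A. c j * (x ^ j - 1))"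
    by (simp add: sum_subtractf algebra_simps)
  also have "(x - 1) dvd \<dots>"
    by (intro dvd_sum dvd_mult) (simp add: power_diff_1_eq)
  finally show ?thesis
    by (simp add: mod_eq_dvd_iff)
qed

definition binomial_fold :: "nat \<Rightarrow> int \<Rightarrow> int" where
  "binomial_fold n x =
     (\<Sum>k<n + 1. int (2 * n choose k) * x ^ k) - (\<Sum>j<n. int (2 * n choose (n + 1 + j)) * x ^ j)"

lemma power_eq_binomial_fold:
  fixes x :: int
  shows "(x + 1) ^ (2 * n) = binomial_fold n x + (x ^ (n + 1) + 1) * (\<Sum>j<n. int (2 * n choose (n + 1 + j)) * x ^ j)"
proof -
  let ?c = "\<lambda>k. int (2 * n choose k)"
  have "(x + 1) ^ (2 * n) = (\<Sum>k<(n + 1) + n. ?c k * x ^ k)"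
    by (simp add: binomial_ring lessThan_Suc_atMost[symmetric] mult_2)
  also have "\<dots> = (\<Sum>k<n + 1. ?c k * x ^ k) + (\<Sum>j<n. ?c (n + 1 + j) * x ^ (n + 1 + j))"
    by (rule sum_lessThan_add)
  also have "(\<Sum>j<n. ?c (n + 1 + j) * x ^ (n + 1 + j)) = x ^ (n + 1) * (\<Sum>j<n. ?c (n + 1 + j) * x ^ j)"
    by (simp add: sum_distrib_left power_add algebra_simps)
  finally show ?thesis
    by (simp add: binomial_fold_def algebra_simps)
qed

lemma binomial_fold_mod_pred:
  fixes x :: int
  shows "binomial_fold n x mod (x - 1) = int (2 * n choose n) mod (x - 1)"
proof -
  let ?c = "\<lambda>k. int (2 * n choose k)"
  have "(\<Sum>j<n. ?c (n + 1 + j)) = (\<Sum>j<n. ?c (n - Suc j))"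
  proof (rule sum.cong)
    fix j
    assume "j \<in> {..<n}"
    then have "2 * n - (n + 1 + j) = n - Suc j"
      by simp
    then show "?c (n + 1 + j) = ?c (n - Suc j)"
      using binomial_symmetric[of "n + 1 + j" "2 * n"] \<open>j \<in> {..<n}\<close> by simp
  qed simp
  also have "\<dots> = (\<Sum>j<n. ?c j)"
    by (rule sum.nat_diff_reindex)
  finally have "(\<Sum>k<n + 1. ?c k) - (\<Sum>j<n. ?c (n + 1 + j)) = ?c n"
    by simp
  then show ?thesis
    unfolding binomial_fold_def
    by (subst mod_diff_eq[symmetric]) (simp only: sum_powers_mod_pred mod_diff_eq)
qed

lemma binomial_fold_bounds:
  fixes x :: int
  assumes "int (2 * n choose n) + 2 \<le> x"
  shows "0 \<le> binomial_fold n x" "binomial_fold n x < x ^ (n + 1) + 1"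
proof -
  let ?c = "\<lambda>k. int (2 * n choose k)"
  define S where "S = (\<Sum>j<n. ?c j * x ^ j)"
  define Q where "Q = (\<Sum>j<n. ?c (n + 1 + j) * x ^ j)"
  have "0 < x"
    using assms by simp
  have cmax: "?c k \<le> ?c n" for k
    by (simp add: binomial_maximum')
  have digit: "0 \<le> ?c k \<and> ?c k < x" for k
    using cmax[of k] assms by linarith
  have "0 \<le> S" "0 \<le> Q"
    unfolding S_def Q_def using \<open>0 < x\<close> by (auto intro!: sum_nonneg)
  have "S < x ^ n" "Q < x ^ n"
    unfolding S_def Q_def using digit by (auto intro: sum_digits_less_power)
  have fold: "binomial_fold n x = ?c n * x ^ n + S - Q"
    by (simp add: binomial_fold_def S_def Q_def)
  have "0 < x ^ n"
    using assms by simp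
  have "1 \<le> ?c n"
    using zero_less_binomial[of n "2 * n"] by linarith
  then have "x ^ n \<le> ?c n * x ^ n"
    using \<open>0 < x ^ n\<close> by simp
  with \<open>0 \<le> S\<close> \<open>Q < x ^ n\<close> show "0 \<le> binomial_fold n x"
    unfolding fold by linarith
  have "?c n * x ^ n \<le> (x - 2) * x ^ n"
    using assms \<open>0 < x ^ n\<close> by (intro mult_right_mono) auto
  also have "\<dots> = x ^ (n + 1) - 2 * x ^ n"
    by (simp add: algebra_simps)
  finally show "binomial_fold n x < x ^ (n + 1) + 1"
    using \<open>0 < x ^ n\<close> \<open>S < x ^ n\<close> \<open>0 \<le> Q\<close> unfolding fold by linarith
qed

lemma central_binomial_mod_mod:
  fixes x :: int
  assumes "int (2 * n choose n) + 2 \<le> x"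
  shows "((x + 1) ^ (2 * n) mod (x ^ (n + 1) + 1)) mod (x - 1) = int (2 * n choose n)"
proof -
  have "(x + 1) ^ (2 * n) mod (x ^ (n + 1) + 1) = binomial_fold n x"
    using binomial_fold_bounds[OF assms] by (simp add: power_eq_binomial_fold)
  then show ?thesis
    using assms by (simp add: binomial_fold_mod_pred)
qed

theorem theorem5p1:
  fixes n :: nat
  assumes "n > 0"
  shows "(2 * n) choose n = (((4::nat) ^ n + 1) ^ (2 * n) mod (4 ^ (n * (n + 1)) + 1)) mod (4 ^ n - 1)"
proof -
  have "(2 * n choose n) + 2 \<le> (4::nat) ^ n"
    using choose_add_two_le_power[of n "2 * n"] assms by (simp add: power_mult)
  then have "int (2 * n choose n) + 2 \<le> 4 ^ n"
    using of_nat_mono[where 'a = int] by fastforce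
  then have "int (2 * n choose n) = (((4::int) ^ n + 1) ^ (2 * n) mod ((4 ^ n) ^ (n + 1) + 1)) mod (4 ^ n - 1)"
    by (rule central_binomial_mod_mod[symmetric])
  also have "\<dots> = int ((((4::nat) ^ n + 1) ^ (2 * n) mod ((4 ^ n) ^ (n + 1) + 1)) mod (4 ^ n - 1))"
    by (simp add: of_nat_mod of_nat_diff add.commute)
  also have "((4::nat) ^ n) ^ (n + 1) = 4 ^ (n * (n + 1))"
    by (rule power_mult[symmetric])
  finally show ?thesis
    by linarith
qed

end
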